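(* Let $n,d\ge 1$, let $X\in\mathbb{R}^{d\times n}$ have columns $x_1,\dots,x_n\in\mathbb{R}^d$, let $y=(y_1,\dots,y_n)^T\in\{-1,+1\}^n$ contain at least one entry equal to $+1$ and at least one entry equal to $-1$, and set $Z=X\,\mathrm{diag}(y)$. Let $q>0$, $C>0$, and let $e\in\mathbb{R}^n$ have all entries positive with $\|e\|_\infty=1$. Let $\kappa=\frac{q+1}{q}q^{\frac{1}{q+1}}$ and let $\alpha^*$ be an optimal solution of the problem $$\min_{\alpha\in\mathbb{R}^n}\Big\{\|Z\alpha\|-\kappa\sum_{i=1}^n\alpha_i^{\frac{q}{q+1}}\;\Big|\;0\le\alpha\le Ce,\ \langle y,\alpha\rangle=0\Big\}.$$ Then there exists $\delta>0$ such that $\alpha^*_i\ge\delta$ for all $i=1,\dots,n$.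
   Context: This problem is (up to sign) the Lagrangian dual of the primal problem $\min\{\sum_{i=1}^n\theta_q(r_i)+C\langle e,\xi\rangle \mid Z^Tw+\beta y+\xi-r=0,\ \|w\|\le1,\ \xi\ge0\}$, where $\theta_q(t)=t^{-q}$ for $t>0$ and $+\infty$ otherwise. $\|\cdot\|$ is the Euclidean norm; inequalities between vectors are componentwise. *)

theory Defs
  imports "HOL-Analysis.Analysis"
begin

definition diag_mat :: "real ^ 'n \<Rightarrow> real ^ 'n ^ 'n" where
  "diag_mat y = (\<chi> i j. if i = j then y $ i else 0)"

definition kappa :: "real \<Rightarrow> real" where
  "kappa q = (q + 1) / q * q powr (1 / (q + 1))"

definition dual_obj :: "real ^ 'n ^ 'd \<Rightarrow> real ^ 'n \<Rightarrow> real \<Rightarrow> real ^ 'n \<Rightarrow> real" where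
  "dual_obj X y q \<alpha> =
     norm ((X ** diag_mat y) *v \<alpha>) - kappa q * (\<Sum>i\<in>UNIV. (\<alpha> $ i) powr (q / (q + 1)))"

definition dual_feasible :: "real ^ 'n \<Rightarrow> real \<Rightarrow> real ^ 'n \<Rightarrow> real ^ 'n \<Rightarrow> bool" where
  "dual_feasible y C e \<alpha> \<longleftrightarrow> (\<forall>i. 0 \<le> \<alpha> $ i \<and> \<alpha> $ i \<le> C * e $ i) \<and> y \<bullet> \<alpha> = 0"

end

theory Submission
  imports Defs "HOL-Real_Asymp.Real_Asymp"
begin

text \<open>
  Suppose some coordinate \<open>\<alpha>\<^sub>k\<close> of the optimal \<open>\<alpha>\<close> vanishes. Either some coordinate with the label
  \<open>-y\<^sub>k\<close> lies below its upper bound, and we raise it together with \<open>\<alpha>\<^sub>k\<close>; or all of them sit at their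
  positive upper bounds, and then \<open>\<langle>y,\<alpha>\<rangle> = 0\<close> forces a positive coordinate with label \<open>y\<^sub>k\<close>, which we
  lower while raising \<open>\<alpha>\<^sub>k\<close>. Either way \<open>\<alpha> + t d\<close> stays feasible for small \<open>t > 0\<close>, where
  \<open>d \<in> {-1,0,1}\<^sup>n\<close> and \<open>d\<^sub>k = 1\<close>. Along it the norm term grows at most linearly in \<open>t\<close>, and so does the
  loss in the concave terms of the other coordinates, while the \<open>k\<close>-th term gains \<open>\<kappa> t\<^sup>p\<close> with
  \<open>p = q/(q+1) < 1\<close>. For small \<open>t\<close> the gain wins, contradicting optimality. Hence all coordinates
  are positive and \<open>\<delta>\<close> can be taken to be the least of them.
\<close>

lemma kappa_pos: "q > 0 \<Longrightarrow> kappa q > 0"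
  by (simp add: kappa_def)

lemma powr_diff_ge_linear:
  fixes a t p :: real
  assumes "0 < a" "0 \<le> t" "t \<le> a" "0 \<le> p" "p \<le> 1"
  shows "a powr p - a powr (p - 1) * t \<le> (a - t) powr p"
proof -
  have r: "0 \<le> (a - t) / a" "(a - t) / a \<le> 1" using assms by auto
  have "a powr p - a powr (p - 1) * t = a powr p * ((a - t) / a)"
    using assms by (simp add: powr_diff field_simps)
  also have "\<dots> \<le> a powr p * ((a - t) / a) powr p"
    using powr_mono'[of p 1 "(a - t) / a"] r assms by (intro mult_left_mono) auto
  also have "\<dots> = (a - t) powr p"
    using assms r by (simp add: powr_mult[symmetric])
  finally show ?thesis .
qed

lemma sum_powr_step_ge:
  fixes a d :: "real ^ 'n" and p t :: real
  assumes p: "0 \<le> p" "p \<le> 1" and t: "0 < t"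
    and a_nonneg: "\<forall>i. 0 \<le> a $ i" and step_nonneg: "\<forall>i. 0 \<le> a $ i + t * d $ i"
    and d_vals: "\<forall>i. d $ i \<in> {-1, 0, 1}" and "a $ k = 0" "d $ k = 1"
  shows "(\<Sum>i\<in>UNIV. a $ i powr p) + t powr p - CARD('n) * (\<Sum>i\<in>UNIV. a $ i powr (p - 1)) * t
           \<le> (\<Sum>i\<in>UNIV. (a + t *\<^sub>R d) $ i powr p)"
proof -
  define B where "B = (\<Sum>i\<in>UNIV. a $ i powr (p - 1))"
  have B_nonneg: "0 \<le> B * t" using t unfolding B_def by (intro mult_nonneg_nonneg sum_nonneg) auto
  have "a $ i powr p + (if i = k then t powr p else 0) - B * t \<le> (a + t *\<^sub>R d) $ i powr p" for i
  proof -
    consider "i = k" | "d $ i = 0" | "i \<noteq> k" "d $ i = 1" | "i \<noteq> k" "d $ i = -1"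
      using d_vals by blast
    then show ?thesis
    proof cases
      case 3
      have "a $ i powr p \<le> (a $ i + t) powr p"
        using a_nonneg t p by (intro powr_mono2) auto
      with 3 B_nonneg show ?thesis by simp
    next
      case 4
      have "0 < a $ i" "t \<le> a $ i" using step_nonneg[rule_format, of i] 4 t by auto
      then have "a $ i powr p - a $ i powr (p - 1) * t \<le> (a $ i - t) powr p"
        using powr_diff_ge_linear t p by auto
      moreover have "a $ i powr (p - 1) * t \<le> B * t"
        unfolding B_def using t by (intro mult_right_mono member_le_sum) auto
      ultimately show ?thesis using 4 by simp
    qed (use assms B_nonneg in auto)
  qed
  then have "(\<Sum>i\<in>UNIV. a $ i powr p + (if i = k then t powr p else 0) - B * t)
               \<le> (\<Sum>i\<in>UNIV. (a + t *\<^sub>R d) $ i powr p)"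
    by (intro sum_mono)
  then show ?thesis by (simp add: sum.distrib sum_subtractf B_def)
qed

lemma dual_obj_step_le:
  fixes X :: "real ^ 'n ^ 'd" and y \<alpha> d :: "real ^ 'n" and q :: real
  assumes q: "0 < q" and \<alpha>_nonneg: "\<forall>i. 0 \<le> \<alpha> $ i"
    and d_vals: "\<forall>i. d $ i \<in> {-1, 0, 1}" and "\<alpha> $ k = 0" "d $ k = 1"
  obtains L where "\<And>t. 0 < t \<Longrightarrow> \<forall>i. 0 \<le> \<alpha> $ i + t * d $ i \<Longrightarrow>
    dual_obj X y q (\<alpha> + t *\<^sub>R d) \<le> dual_obj X y q \<alpha> + L * t - kappa q * t powr (q / (q + 1))"
proof
  define M where "M = X ** diag_mat y"
  define p where "p = q / (q + 1)"
  define B where "B = (\<Sum>i\<in>UNIV. \<alpha> $ i powr (p - 1))"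
  fix t :: real
  assume t: "0 < t" and step_nonneg: "\<forall>i. 0 \<le> \<alpha> $ i + t * d $ i"
  have "norm (M *v (\<alpha> + t *\<^sub>R d)) \<le> norm (M *v \<alpha>) + t * norm (M *v d)"
    using norm_triangle_ineq[of "M *v \<alpha>" "t *\<^sub>R (M *v d)"] t
    by (simp add: matrix_vector_right_distrib matrix_vector_mult_scaleR)
  moreover have "kappa q * ((\<Sum>i\<in>UNIV. \<alpha> $ i powr p) + t powr p - CARD('n) * B * t)
                   \<le> kappa q * (\<Sum>i\<in>UNIV. (\<alpha> + t *\<^sub>R d) $ i powr p)"
    using sum_powr_step_ge[of p t \<alpha> d] assms t step_nonneg kappa_pos[OF q]
    by (intro mult_left_mono) (auto simp: p_def B_def)
  ultimately show "dual_obj X y q (\<alpha> + t *\<^sub>R d)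
      \<le> dual_obj X y q \<alpha> + (norm (M *v d) + kappa q * CARD('n) * B) * t - kappa q * t powr (q / (q + 1))"
    by (simp add: dual_obj_def M_def p_def algebra_simps)
qed

lemma eventually_dual_feasible_step:
  fixes y e \<alpha> d :: "real ^ 'n" and C :: real
  assumes feas: "dual_feasible y C e \<alpha>" and d_vals: "\<forall>i. d $ i \<in> {-1, 0, 1}" and "y \<bullet> d = 0"
    and up: "\<forall>i. d $ i = 1 \<longrightarrow> \<alpha> $ i < C * e $ i" and down: "\<forall>i. d $ i = -1 \<longrightarrow> 0 < \<alpha> $ i"
  shows "\<forall>\<^sub>F t in at_right 0. dual_feasible y C e (\<alpha> + t *\<^sub>R d)"
proof -
  have "\<forall>\<^sub>F t in at_right 0. 0 \<le> \<alpha> $ i + t * d $ i \<and> \<alpha> $ i + t * d $ i \<le> C * e $ i" for i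
  proof -
    have box: "0 \<le> \<alpha> $ i" "\<alpha> $ i \<le> C * e $ i" using feas by (auto simp: dual_feasible_def)
    consider "d $ i = 0" | "d $ i = 1" | "d $ i = -1" using d_vals by blast
    then show ?thesis
    proof cases
      case 2
      with up have "0 < C * e $ i - \<alpha> $ i" by simp
      then have "\<forall>\<^sub>F t in at_right 0. 0 < t \<and> t < C * e $ i - \<alpha> $ i"
        using eventually_at_right_real by fastforce
      then show ?thesis by eventually_elim (use 2 box in auto)
    next
      case 3
      with down have "0 < \<alpha> $ i" by simp
      then have "\<forall>\<^sub>F t in at_right 0. 0 < t \<and> t < \<alpha> $ i"
        using eventually_at_right_real by fastforce
      then show ?thesis by eventually_elim (use 3 box in auto)
    qed (use box in auto)
  qed
  then have "\<forall>\<^sub>F t in at_right 0. \<forall>i. 0 \<le> \<alpha> $ i + t * d $ i \<and> \<alpha> $ i + t * d $ i \<le> C * e $ i"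
    by (rule eventually_all_finite)
  then show ?thesis
    by eventually_elim (use feas \<open>y \<bullet> d = 0\<close> in \<open>auto simp: dual_feasible_def inner_add_right\<close>)
qed

lemma dual_optimal_no_feasible_direction:
  fixes X :: "real ^ 'n ^ 'd" and y e \<alpha> d :: "real ^ 'n" and q C :: real
  assumes q: "0 < q" and feas: "dual_feasible y C e \<alpha>"
    and opt: "\<forall>\<beta>. dual_feasible y C e \<beta> \<longrightarrow> dual_obj X y q \<alpha> \<le> dual_obj X y q \<beta>"
    and k: "\<alpha> $ k = 0" "d $ k = 1" and d_vals: "\<forall>i. d $ i \<in> {-1, 0, 1}" and dir: "y \<bullet> d = 0"
      "\<forall>i. d $ i = 1 \<longrightarrow> \<alpha> $ i < C * e $ i" "\<forall>i. d $ i = -1 \<longrightarrow> 0 < \<alpha> $ i"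
  shows False
proof -
  have \<alpha>_nonneg: "\<forall>i. 0 \<le> \<alpha> $ i" using feas by (simp add: dual_feasible_def)
  obtain L where obj: "\<And>t. 0 < t \<Longrightarrow> \<forall>i. 0 \<le> \<alpha> $ i + t * d $ i \<Longrightarrow>
      dual_obj X y q (\<alpha> + t *\<^sub>R d) \<le> dual_obj X y q \<alpha> + L * t - kappa q * t powr (q / (q + 1))"
    using dual_obj_step_le[OF q \<alpha>_nonneg d_vals k] by blast
  have "0 < q / (q + 1)" "q / (q + 1) < 1" using q by auto
  then have "\<forall>\<^sub>F t in at_right 0. L * t < kappa q * t powr (q / (q + 1))"
    using kappa_pos[OF q] by real_asymp
  moreover have "\<forall>\<^sub>F t in at_right 0. dual_feasible y C e (\<alpha> + t *\<^sub>R d)"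
    by (rule eventually_dual_feasible_step[OF feas d_vals dir])
  moreover have "\<forall>\<^sub>F t::real in at_right 0. 0 < t" by (simp add: eventually_at_right_less)
  ultimately have "\<forall>\<^sub>F t in at_right 0.
      L * t < kappa q * t powr (q / (q + 1)) \<and> dual_feasible y C e (\<alpha> + t *\<^sub>R d) \<and> 0 < t"
    by (intro eventually_conj)
  then obtain t where t: "0 < t" "L * t < kappa q * t powr (q / (q + 1))"
    and feas_t: "dual_feasible y C e (\<alpha> + t *\<^sub>R d)"
    using eventually_happens'[OF trivial_limit_at_right_real] by blast
  from feas_t have "\<forall>i. 0 \<le> \<alpha> $ i + t * d $ i" by (simp add: dual_feasible_def)
  with obj[OF t(1)] t(2) have "dual_obj X y q (\<alpha> + t *\<^sub>R d) < dual_obj X y q \<alpha>" by simp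
  with opt feas_t show False by force
qed

lemma inner_eq_0_same_label_pos:
  fixes y a :: "real ^ 'n"
  assumes y_pm: "\<forall>i. y $ i = 1 \<or> y $ i = -1" and "y \<bullet> a = 0" and a_nonneg: "\<forall>i. 0 \<le> a $ i"
    and j: "y $ j = - y $ k" "0 < a $ j"
  obtains m where "y $ m = y $ k" "0 < a $ m"
proof (rule ccontr)
  assume "\<not> thesis"
  then have same_zero: "y $ i = y $ k \<Longrightarrow> a $ i \<le> 0" for i using that by force
  define h where "h i = y $ k * y $ i * a $ i" for i
  have yk: "y $ k * y $ k = 1" using y_pm by (metis mult_1 mult_minus1 minus_minus)
  have h_nonpos: "h i \<le> 0" for i
  proof (cases "y $ i = y $ k")
    case True
    with same_zero[of i] a_nonneg yk show ?thesis by (simp add: h_def)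
  next
    case False
    then have "y $ i = - y $ k" using y_pm by (metis minus_minus)
    with a_nonneg yk show ?thesis by (simp add: h_def)
  qed
  have "(\<Sum>i\<in>UNIV. h i) = h j + (\<Sum>i\<in>UNIV - {j}. h i)"
    by (simp add: sum.remove)
  also have "\<dots> < 0"
    using j yk sum_nonpos[of "UNIV - {j}" h] h_nonpos by (simp add: h_def)
  finally have "(\<Sum>i\<in>UNIV. h i) < 0" .
  moreover have "(\<Sum>i\<in>UNIV. h i) = y $ k * (y \<bullet> a)"
    by (simp add: h_def inner_vec_def sum_distrib_left mult.assoc)
  ultimately show False using \<open>y \<bullet> a = 0\<close> by simp
qed

lemma dual_feasible_direction_exists:
  fixes y e \<alpha> :: "real ^ 'n" and C :: real
  assumes y_pm: "\<forall>i. y $ i = 1 \<or> y $ i = -1"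
    and y_pos: "\<exists>i. y $ i = 1" and y_neg: "\<exists>i. y $ i = -1"
    and C_pos: "C > 0" and e_pos: "\<forall>i. e $ i > 0"
    and feas: "dual_feasible y C e \<alpha>" and k: "\<alpha> $ k = 0"
  obtains d where "d $ k = 1" "\<forall>i. d $ i \<in> {-1, 0, 1}" "y \<bullet> d = 0"
    "\<forall>i. d $ i = 1 \<longrightarrow> \<alpha> $ i < C * e $ i" "\<forall>i. d $ i = -1 \<longrightarrow> 0 < \<alpha> $ i"
proof (cases "\<exists>j. y $ j = - y $ k \<and> \<alpha> $ j < C * e $ j")
  case True
  then obtain j where j: "y $ j = - y $ k" "\<alpha> $ j < C * e $ j" by blast
  have "j \<noteq> k" using j(1) y_pm[rule_format, of k] by auto
  have "y \<bullet> (axis k 1 + axis j 1) = 0" using j(1) by (simp add: inner_add_right inner_axis)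
  then show thesis
    by (rule that[rotated 2]) (use \<open>j \<noteq> k\<close> j k C_pos e_pos in \<open>auto simp: axis_def\<close>)
next
  case False
  obtain j where j: "y $ j = - y $ k" using y_pm y_pos y_neg by (metis minus_minus)
  with False have "C * e $ j \<le> \<alpha> $ j" by (meson not_le)
  then have "0 < \<alpha> $ j" using C_pos e_pos by (meson mult_pos_pos order.strict_trans2)
  then obtain m where m: "y $ m = y $ k" "0 < \<alpha> $ m"
    using inner_eq_0_same_label_pos[OF y_pm _ _ j] feas by (auto simp: dual_feasible_def)
  then have "m \<noteq> k" using k by auto
  have "y \<bullet> (axis k 1 - axis m 1) = 0" using m(1) by (simp add: inner_diff_right inner_axis)
  then show thesis
    by (rule that[rotated 2]) (use \<open>m \<noteq> k\<close> m k C_pos e_pos in \<open>auto simp: axis_def\<close>)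
qed

theorem proposition2:
  fixes X :: "real ^ 'n ^ 'd" and y e \<alpha>s :: "real ^ 'n" and q C :: real
  assumes y_pm: "\<forall>i. y $ i = 1 \<or> y $ i = -1"
    and y_pos: "\<exists>i. y $ i = 1" and y_neg: "\<exists>i. y $ i = -1"
    and q_pos: "q > 0" and C_pos: "C > 0"
    and e_pos: "\<forall>i. e $ i > 0" and e_norm: "infnorm e = 1"
    and feas: "dual_feasible y C e \<alpha>s"
    and opt: "\<forall>\<alpha>. dual_feasible y C e \<alpha> \<longrightarrow> dual_obj X y q \<alpha>s \<le> dual_obj X y q \<alpha>"
  shows "\<exists>\<delta>>0. \<forall>i. \<alpha>s $ i \<ge> \<delta>"
proof -
  have pos: "0 < \<alpha>s $ k" for k
  proof (rule ccontr)
    assume "\<not> 0 < \<alpha>s $ k"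
    with feas have "\<alpha>s $ k = 0" by (simp add: dual_feasible_def eq_iff not_less)
    then obtain d where "d $ k = 1" "\<forall>i. d $ i \<in> {-1, 0, 1}" "y \<bullet> d = 0"
      "\<forall>i. d $ i = 1 \<longrightarrow> \<alpha>s $ i < C * e $ i" "\<forall>i. d $ i = -1 \<longrightarrow> 0 < \<alpha>s $ i"
      using dual_feasible_direction_exists[OF y_pm y_pos y_neg C_pos e_pos feas] by blast
    then show False
      using dual_optimal_no_feasible_direction[OF q_pos feas opt \<open>\<alpha>s $ k = 0\<close>] by blast
  qed
  show ?thesis
  proof (intro exI conjI allI)
    show "0 < Min (range (\<lambda>i. \<alpha>s $ i))" using pos by (subst Min_gr_iff) auto
    show "Min (range (\<lambda>i. \<alpha>s $ i)) \<le> \<alpha>s $ i" for i by (rule Min_le) auto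
  qed
qed

end
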